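(* Let $(D,\prec,\succ,\alpha)$ be a Hom-dendriform algebra and $(V,\prec_l,\succ_l,\prec_r,\succ_r,\beta)$ a representation of it. On $D\oplus V$ define, for $x,y\in D$, $u,v\in V$: $(x,u)\prec_\vdash(y,v)=(x\prec y,\ x\prec_l v)$, $(x,u)\prec_\dashv(y,v)=(x\prec y,\ u\prec_r y)$, $(x,u)\succ_\vdash(y,v)=(x\succ y,\ x\succ_l v)$, $(x,u)\succ_\dashv(y,v)=(x\succ y,\ u\succ_r y)$, and the linear map $\alpha\otimes\beta:D\oplus V\to D\oplus V$, $(x,u)\mapsto(\alpha(x),\beta(u))$. Then $(D\oplus V,\prec_\vdash,\prec_\dashv,\succ_\vdash,\succ_\dashv,\alpha\otimes\beta)$ is a Hom-quadri-dendriform algebra (called the hemi-semidirect product Hom-quadri-dendriform algebra).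
   Context: All vector spaces are over a field of characteristic zero. A Hom-dendriform algebra is $(D,\prec,\succ,\alpha)$ with $\prec,\succ$ bilinear on $D$ and $\alpha:D\to D$ linear such that for all $x,y,z$: $\alpha(x)\prec(y\prec z+y\succ z)=(x\prec y)\prec\alpha(z)$; $\alpha(x)\succ(y\prec z)=(x\succ y)\prec\alpha(z)$; $\alpha(x)\succ(y\succ z)=(x\prec y+x\succ y)\succ\alpha(z)$. A representation of $(D,\prec,\succ,\alpha)$ is a vector space $V$ with a linear map $\beta:V\to V$ and bilinear maps $\prec_l,\succ_l:D\times V\to V$, $\prec_r,\succ_r:V\times D\to V$ such that for all $x,y\in D$, $m\in V$: $(x\prec y)\prec_l\beta(m)=\alpha(x)\prec_l(y\prec_l m+y\succ_l m)$; $(x\succ y)\prec_l\beta(m)=\alpha(x)\succ_l(y\prec_l m)$; $\alpha(x)\succ_l(y\succ_l m)=(x\prec y+x\succ y)\succ_l\beta(m)$; $\beta(m)\prec_r(x\prec y+x\succ y)=(m\prec_r x)\prec_r\alpha(y)$; $\beta(m)\succ_r(x\prec y)=(m\succ_r x)\prec_r\alpha(y)$; $(m\prec_r x+m\succ_r x)\succ_r\alpha(y)=\beta(m)\succ_r(x\succ y)$; $(x\prec_l m)\prec_r\alpha(y)=\alpha(x)\prec_l(m\prec_r y+m\succ_r y)$; $(x\succ_l m)\prec_r\alpha(y)=\alpha(x)\succ_l(m\prec_r y)$; $(x\prec_l m+x\succ_l m)\succ_r\alpha(y)=\alpha(x)\succ_l(m\succ_r y)$. A Hom-quadri-dendriform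 algebra is a tuple $(E,\prec_\vdash,\prec_\dashv,\succ_\vdash,\succ_\dashv,\gamma)$ with four bilinear operations on $E$ and $\gamma:E\to E$ linear such that for all $x,y,z\in E$: (Q1) $(x\prec_\vdash y)\prec_\vdash\gamma(z)=(x\prec_\dashv y)\prec_\vdash\gamma(z)=\gamma(x)\prec_\vdash(y\prec_\vdash z+y\succ_\vdash z)$; (Q2) $(x\succ_\vdash y)\prec_\vdash\gamma(z)=(x\succ_\dashv y)\prec_\vdash\gamma(z)=\gamma(x)\succ_\vdash(y\prec_\vdash z)$; (Q3) $\gamma(x)\succ_\vdash(y\succ_\vdash z)=(x\prec_\vdash y+x\succ_\vdash y)\succ_\vdash\gamma(z)=(x\prec_\dashv y+x\succ_\dashv y)\succ_\vdash\gamma(z)$; (Q4) $\gamma(x)\succ_\vdash(y\succ_\vdash z)=(x\prec_\dashv y+x\succ_\vdash y)\succ_\vdash\gamma(z)=(x\prec_\vdash y+x\succ_\dashv y)\succ_\vdash\gamma(z)$; (Q5) $(x\prec_\vdash y)\prec_\dashv\gamma(z)=\gamma(x)\prec_\vdash(y\prec_\dashv z+y\succ_\dashv z)$; (Q6) $(x\succ_\vdash y)\prec_\dashv\gamma(z)=\gamma(x)\succ_\vdash(y\prec_\dashv z)$; (Q7) $\gamma(x)\succ_\vdash(y\succ_\dashv z)=(x\prec_\vdash y+x\succ_\vdash y)\succ_\dashv\gamma(z)$; (Q8) $(x\prec_\dashv y)\prec_\dashv\gamma(z)=\gamma(x)\prec_\dashv(y\prec_\vdash z+y\succ_\vdash z)=\gamma(x)\prec_\dashv(y\prec_\dashv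 z+y\succ_\dashv z)$; (Q9) $(x\prec_\dashv y)\prec_\dashv\gamma(z)=\gamma(x)\prec_\dashv(y\prec_\vdash z+y\succ_\dashv z)=\gamma(x)\prec_\dashv(y\prec_\dashv z+y\succ_\vdash z)$; (Q10) $(x\succ_\dashv y)\prec_\dashv\gamma(z)=\gamma(x)\succ_\dashv(y\prec_\vdash z)=\gamma(x)\succ_\dashv(y\prec_\dashv z)$; (Q11) $\gamma(x)\succ_\dashv(y\succ_\vdash z)=\gamma(x)\succ_\dashv(y\succ_\dashv z)=(x\prec_\dashv y+x\succ_\dashv y)\succ_\dashv\gamma(z)$. *)

theory Defs
  imports Complex_Main "HOL-Library.Product_Plus"
begin

definition bilinear_map ::
  "('k::field \<Rightarrow> 'a::ab_group_add \<Rightarrow> 'a) \<Rightarrow> ('k \<Rightarrow> 'b::ab_group_add \<Rightarrow> 'b) \<Rightarrow>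
   ('k \<Rightarrow> 'c::ab_group_add \<Rightarrow> 'c) \<Rightarrow> ('a \<Rightarrow> 'b \<Rightarrow> 'c) \<Rightarrow> bool" where
  "bilinear_map s1 s2 s3 f \<longleftrightarrow>
     (\<forall>x. Vector_Spaces.linear s2 s3 (f x)) \<and> (\<forall>y. Vector_Spaces.linear s1 s3 (\<lambda>x. f x y))"

definition hom_dendriform ::
  "('k::field_char_0 \<Rightarrow> 'd::ab_group_add \<Rightarrow> 'd) \<Rightarrow> ('d \<Rightarrow> 'd \<Rightarrow> 'd) \<Rightarrow> ('d \<Rightarrow> 'd \<Rightarrow> 'd)
   \<Rightarrow> ('d \<Rightarrow> 'd) \<Rightarrow> bool" where
  "hom_dendriform s lt gt \<alpha> \<longleftrightarrow>
     vector_space s \<and> bilinear_map s s s lt \<and> bilinear_map s s s gt \<and> Vector_Spaces.linear s s \<alpha> \<and>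
     (\<forall>x y z. lt (\<alpha> x) (lt y z + gt y z) = lt (lt x y) (\<alpha> z)) \<and>
     (\<forall>x y z. gt (\<alpha> x) (lt y z) = lt (gt x y) (\<alpha> z)) \<and>
     (\<forall>x y z. gt (\<alpha> x) (gt y z) = gt (lt x y + gt x y) (\<alpha> z))"

definition hom_dendriform_rep ::
  "('k::field_char_0 \<Rightarrow> 'd::ab_group_add \<Rightarrow> 'd) \<Rightarrow> ('d \<Rightarrow> 'd \<Rightarrow> 'd) \<Rightarrow> ('d \<Rightarrow> 'd \<Rightarrow> 'd) \<Rightarrow> ('d \<Rightarrow> 'd)
   \<Rightarrow> ('k \<Rightarrow> 'v::ab_group_add \<Rightarrow> 'v) \<Rightarrow> ('d \<Rightarrow> 'v \<Rightarrow> 'v) \<Rightarrow> ('d \<Rightarrow> 'v \<Rightarrow> 'v)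
   \<Rightarrow> ('v \<Rightarrow> 'd \<Rightarrow> 'v) \<Rightarrow> ('v \<Rightarrow> 'd \<Rightarrow> 'v) \<Rightarrow> ('v \<Rightarrow> 'v) \<Rightarrow> bool" where
  "hom_dendriform_rep s lt gt \<alpha> sv ltl gtl ltr gtr \<beta> \<longleftrightarrow>
     vector_space sv \<and> Vector_Spaces.linear sv sv \<beta> \<and>
     bilinear_map s sv sv ltl \<and> bilinear_map s sv sv gtl \<and>
     bilinear_map sv s sv ltr \<and> bilinear_map sv s sv gtr \<and>
     (\<forall>x y m. ltl (lt x y) (\<beta> m) = ltl (\<alpha> x) (ltl y m + gtl y m)) \<and>
     (\<forall>x y m. ltl (gt x y) (\<beta> m) = gtl (\<alpha> x) (ltl y m)) \<and>
     (\<forall>x y m. gtl (\<alpha> x) (gtl y m) = gtl (lt x y + gt x y) (\<beta> m)) \<and>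
     (\<forall>x y m. ltr (\<beta> m) (lt x y + gt x y) = ltr (ltr m x) (\<alpha> y)) \<and>
     (\<forall>x y m. gtr (\<beta> m) (lt x y) = ltr (gtr m x) (\<alpha> y)) \<and>
     (\<forall>x y m. gtr (ltr m x + gtr m x) (\<alpha> y) = gtr (\<beta> m) (gt x y)) \<and>
     (\<forall>x y m. ltr (ltl x m) (\<alpha> y) = ltl (\<alpha> x) (ltr m y + gtr m y)) \<and>
     (\<forall>x y m. ltr (gtl x m) (\<alpha> y) = gtl (\<alpha> x) (ltr m y)) \<and>
     (\<forall>x y m. gtr (ltl x m + gtl x m) (\<alpha> y) = gtl (\<alpha> x) (gtr m y))"

text \<open>Hom-quadri-dendriform algebra (E, lv = prec_vdash, ld = prec_dashv,
  gv = succ_vdash, gd = succ_dashv, gamma).\<close>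
definition hom_quadri_dendriform ::
  "('k::field_char_0 \<Rightarrow> 'e::ab_group_add \<Rightarrow> 'e) \<Rightarrow> ('e \<Rightarrow> 'e \<Rightarrow> 'e) \<Rightarrow> ('e \<Rightarrow> 'e \<Rightarrow> 'e)
   \<Rightarrow> ('e \<Rightarrow> 'e \<Rightarrow> 'e) \<Rightarrow> ('e \<Rightarrow> 'e \<Rightarrow> 'e) \<Rightarrow> ('e \<Rightarrow> 'e) \<Rightarrow> bool" where
  "hom_quadri_dendriform s lv ld gv gd \<gamma> \<longleftrightarrow>
     vector_space s \<and> bilinear_map s s s lv \<and> bilinear_map s s s ld \<and>
     bilinear_map s s s gv \<and> bilinear_map s s s gd \<and> Vector_Spaces.linear s s \<gamma> \<and>
     (\<forall>x y z. lv (lv x y) (\<gamma> z) = lv (ld x y) (\<gamma> z) \<and>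
              lv (ld x y) (\<gamma> z) = lv (\<gamma> x) (lv y z + gv y z)) \<and>
     (\<forall>x y z. lv (gv x y) (\<gamma> z) = lv (gd x y) (\<gamma> z) \<and>
              lv (gd x y) (\<gamma> z) = gv (\<gamma> x) (lv y z)) \<and>
     (\<forall>x y z. gv (\<gamma> x) (gv y z) = gv (lv x y + gv x y) (\<gamma> z) \<and>
              gv (lv x y + gv x y) (\<gamma> z) = gv (ld x y + gd x y) (\<gamma> z)) \<and>
     (\<forall>x y z. gv (\<gamma> x) (gv y z) = gv (ld x y + gv x y) (\<gamma> z) \<and>
              gv (ld x y + gv x y) (\<gamma> z) = gv (lv x y + gd x y) (\<gamma> z)) \<and>
     (\<forall>x y z. ld (lv x y) (\<gamma> z) = lv (\<gamma> x) (ld y z + gd y z)) \<and>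
     (\<forall>x y z. ld (gv x y) (\<gamma> z) = gv (\<gamma> x) (ld y z)) \<and>
     (\<forall>x y z. gv (\<gamma> x) (gd y z) = gd (lv x y + gv x y) (\<gamma> z)) \<and>
     (\<forall>x y z. ld (ld x y) (\<gamma> z) = ld (\<gamma> x) (lv y z + gv y z) \<and>
              ld (\<gamma> x) (lv y z + gv y z) = ld (\<gamma> x) (ld y z + gd y z)) \<and>
     (\<forall>x y z. ld (ld x y) (\<gamma> z) = ld (\<gamma> x) (lv y z + gd y z) \<and>
              ld (\<gamma> x) (lv y z + gd y z) = ld (\<gamma> x) (ld y z + gv y z)) \<and>
     (\<forall>x y z. ld (gd x y) (\<gamma> z) = gd (\<gamma> x) (lv y z) \<and>
              gd (\<gamma> x) (lv y z) = gd (\<gamma> x) (ld y z)) \<and>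
     (\<forall>x y z. gd (\<gamma> x) (gv y z) = gd (\<gamma> x) (gd y z) \<and>
              gd (\<gamma> x) (gd y z) = gd (ld x y + gd x y) (\<gamma> z))"

text \<open>The direct sum D \<oplus> V is the product type with componentwise operations.\<close>
definition sum_scale :: "('k \<Rightarrow> 'd \<Rightarrow> 'd) \<Rightarrow> ('k \<Rightarrow> 'v \<Rightarrow> 'v) \<Rightarrow> 'k \<Rightarrow> 'd \<times> 'v \<Rightarrow> 'd \<times> 'v" where
  "sum_scale s sv c p = (s c (fst p), sv c (snd p))"

end

theory Submission
  imports Defs
begin

text \<open>All four operations of the hemi-semidirect product agree with \<open>\<prec>\<close> or \<open>\<succ>\<close> on the
  \<open>D\<close>-component, and each one reads the \<open>V\<close>-component of only one of its arguments.
  Hence every identity (Q1)--(Q11), compared componentwise, is a Hom-dendriform axiom in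
  \<open>D\<close> and one of the nine representation axioms in \<open>V\<close>; the two sides of the
  alternative forms in (Q1)--(Q4) and (Q8)--(Q11) differ only in \<open>V\<close>-components that are
  never read.\<close>

lemma bilinear_map_iff:
  "bilinear_map s1 s2 s3 f \<longleftrightarrow>
     vector_space s1 \<and> vector_space s2 \<and> vector_space s3 \<and>
     (\<forall>x y z. f x (y + z) = f x y + f x z) \<and> (\<forall>x c y. f x (s2 c y) = s3 c (f x y)) \<and>
     (\<forall>x y z. f (x + y) z = f x z + f y z) \<and> (\<forall>x c y. f (s1 c x) y = s3 c (f x y))"
  unfolding bilinear_map_def Vector_Spaces.linear_iff by blast

lemma vector_space_sum_scale:
  assumes "vector_space s" and "vector_space sv"
  shows "vector_space (sum_scale s sv)"
  using assms unfolding vector_space_def sum_scale_def by simp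

lemma linear_sum_scale_prod:
  assumes "Vector_Spaces.linear s1 s2 f" and "Vector_Spaces.linear t1 t2 g"
  shows "Vector_Spaces.linear (sum_scale s1 t1) (sum_scale s2 t2) (\<lambda>(x, u). (f x, g u))"
proof -
  have "vector_space (sum_scale s1 t1)" and "vector_space (sum_scale s2 t2)"
    using assms by (simp_all add: Vector_Spaces.linear_iff vector_space_sum_scale)
  then show ?thesis
    using assms unfolding Vector_Spaces.linear_iff by (simp add: sum_scale_def split_beta)
qed

lemma bilinear_map_sum_scale_left_action:
  assumes "bilinear_map s1 s2 s3 f" and "bilinear_map s1 t2 t3 g" and "vector_space t1"
  shows "bilinear_map (sum_scale s1 t1) (sum_scale s2 t2) (sum_scale s3 t3)
           (\<lambda>(x, u) (y, v). (f x y, g x v))"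
proof -
  have "vector_space (sum_scale s1 t1)" "vector_space (sum_scale s2 t2)" "vector_space (sum_scale s3 t3)"
    using assms by (simp_all add: bilinear_map_iff vector_space_sum_scale)
  then show ?thesis
    using assms unfolding bilinear_map_iff by (simp add: sum_scale_def split_beta)
qed

lemma bilinear_map_sum_scale_right_action:
  assumes "bilinear_map s1 s2 s3 f" and "bilinear_map t1 s2 t3 h" and "vector_space t2"
  shows "bilinear_map (sum_scale s1 t1) (sum_scale s2 t2) (sum_scale s3 t3)
           (\<lambda>(x, u) (y, v). (f x y, h u y))"
proof -
  have "vector_space (sum_scale s1 t1)" "vector_space (sum_scale s2 t2)" "vector_space (sum_scale s3 t3)"
    using assms by (simp_all add: bilinear_map_iff vector_space_sum_scale)
  then show ?thesis
    using assms unfolding bilinear_map_iff by (simp add: sum_scale_def split_beta)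
qed

theorem proposition3p7:
  fixes s :: "'k::field_char_0 \<Rightarrow> 'd::ab_group_add \<Rightarrow> 'd"
    and lt gt :: "'d \<Rightarrow> 'd \<Rightarrow> 'd" and \<alpha> :: "'d \<Rightarrow> 'd"
    and sv :: "'k \<Rightarrow> 'v::ab_group_add \<Rightarrow> 'v"
    and ltl gtl :: "'d \<Rightarrow> 'v \<Rightarrow> 'v" and ltr gtr :: "'v \<Rightarrow> 'd \<Rightarrow> 'v" and \<beta> :: "'v \<Rightarrow> 'v"
  assumes "hom_dendriform s lt gt \<alpha>"
    and "hom_dendriform_rep s lt gt \<alpha> sv ltl gtl ltr gtr \<beta>"
  shows "hom_quadri_dendriform (sum_scale s sv)
           (\<lambda>(x, u) (y, v). (lt x y, ltl x v))
           (\<lambda>(x, u) (y, v). (lt x y, ltr u y))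
           (\<lambda>(x, u) (y, v). (gt x y, gtl x v))
           (\<lambda>(x, u) (y, v). (gt x y, gtr u y))
           (\<lambda>(x, u). (\<alpha> x, \<beta> u))"
proof -
  note dend = assms(1)[unfolded hom_dendriform_def]
  note rep = assms(2)[unfolded hom_dendriform_rep_def]
  have "vector_space (sum_scale s sv)"
    using dend rep by (simp add: vector_space_sum_scale)
  moreover have "Vector_Spaces.linear (sum_scale s sv) (sum_scale s sv) (\<lambda>(x, u). (\<alpha> x, \<beta> u))"
    using dend rep by (simp add: linear_sum_scale_prod)
  moreover have
    "bilinear_map (sum_scale s sv) (sum_scale s sv) (sum_scale s sv) (\<lambda>(x, u) (y, v). (lt x y, ltl x v))"
    "bilinear_map (sum_scale s sv) (sum_scale s sv) (sum_scale s sv) (\<lambda>(x, u) (y, v). (gt x y, gtl x v))"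
    "bilinear_map (sum_scale s sv) (sum_scale s sv) (sum_scale s sv) (\<lambda>(x, u) (y, v). (lt x y, ltr u y))"
    "bilinear_map (sum_scale s sv) (sum_scale s sv) (sum_scale s sv) (\<lambda>(x, u) (y, v). (gt x y, gtr u y))"
    using dend rep
    by (simp_all add: bilinear_map_sum_scale_left_action bilinear_map_sum_scale_right_action)
  ultimately show ?thesis
    using dend rep unfolding hom_quadri_dendriform_def by (simp add: split_beta)
qed

end
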